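(* In the setting described in the context, $\frac{qAB-q^{-1}BA}{q-q^{-1}}=abI$, $\frac{qBA^*-q^{-1}A^*B}{q-q^{-1}}=a^*bI$, $\frac{qA^*B^*-q^{-1}B^*A^*}{q-q^{-1}}=a^*b^*I$, $\frac{qB^*A-q^{-1}AB^*}{q-q^{-1}}=ab^*I$.
   Context: $\mathbb K$ is an algebraically closed field, $q\in\mathbb K$ nonzero and not a root of unity, $V$ a nonzero finite-dimensional $\mathbb K$-vector space. A tridiagonal pair on $V$ is an ordered pair $A,A^*$ of linear maps $V\to V$ such that: (i) each of $A,A^*$ is diagonalizable; (ii) there is an ordering $V_0,\dots,V_d$ of the eigenspaces of $A$ with $A^*V_i\subseteq V_{i-1}+V_i+V_{i+1}$ ($V_{-1}=V_{d+1}=0$); (iii) there is an ordering $V^*_0,\dots,V^*_\delta$ of the eigenspaces of $A^*$ with $AV^*_i\subseteq V^*_{i-1}+V^*_i+V^*_{i+1}$ ($V^*_{-1}=V^*_{\delta+1}=0$); (iv) no subspace $W\ne0,V$ satisfies $AW\subseteq W$, $A^*W\subseteq W$. It is known $d=\delta$; orderings as in (ii),(iii) are called standard. Setting: $A,A^*$ is a tridiagonal pair on $V$; $V_0,\dots,V_d$ (resp. $V^*_0,\dots,V^*_d$) is a standard ordering of the eigenspaces of $A$ (resp. $A^*$); the eigenvalue of $A$ on $V_i$ is $aq^{2i-d}$ and that of $A^*$ on $V^*_i$ is $a^*q^{d-2i}$ ($0\le i\le d$) for some nonzero $a,a^*\in\mathbb K$; $b,b^*\in\mathbb K$ are nonzero.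 For $0\le i\le d$ the subspaces $(V^*_0+\cdots+V^*_i)\cap(V_0+\cdots+V_{d-i})$ form a decomposition of $V$ (their sum is direct, equals $V$, each is nonzero), as do the subspaces $(V^*_{d-i}+\cdots+V^*_d)\cap(V_i+\cdots+V_d)$. $B:V\to V$ is the linear map acting as $bq^{2i-d}I$ on $(V^*_0+\cdots+V^*_i)\cap(V_0+\cdots+V_{d-i})$ for each $i$, and $B^*:V\to V$ is the linear map acting as $b^*q^{d-2i}I$ on $(V^*_{d-i}+\cdots+V^*_d)\cap(V_i+\cdots+V_d)$ for each $i$. *)

theory Defs
  imports Main "HOL-Computational_Algebra.Polynomial"
begin

definition alg_closed_field :: "'k::field itself \<Rightarrow> bool" where
  "alg_closed_field _ \<longleftrightarrow> (\<forall>p::'k poly. degree p > 0 \<longrightarrow> (\<exists>x. poly p x = 0))"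

definition eigenspace :: "('k::field \<Rightarrow> 'v::ab_group_add \<Rightarrow> 'v) \<Rightarrow> ('v \<Rightarrow> 'v) \<Rightarrow> 'k \<Rightarrow> 'v set" where
  "eigenspace scale A \<theta> = {v. A v = scale \<theta> v}"

definition eigenspaces :: "('k::field \<Rightarrow> 'v::ab_group_add \<Rightarrow> 'v) \<Rightarrow> ('v \<Rightarrow> 'v) \<Rightarrow> 'v set set" where
  "eigenspaces scale A = {eigenspace scale A \<theta> | \<theta>. eigenspace scale A \<theta> \<noteq> {0}}"

definition diagonalizable :: "('k::field \<Rightarrow> 'v::ab_group_add \<Rightarrow> 'v) \<Rightarrow> ('v \<Rightarrow> 'v) \<Rightarrow> bool" where
  "diagonalizable scale A \<longleftrightarrow> Vector_Spaces.linear scale scale A \<and>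
     module.span scale (\<Union>(eigenspaces scale A)) = UNIV"

definition standard_ordering ::
  "('k::field \<Rightarrow> 'v::ab_group_add \<Rightarrow> 'v) \<Rightarrow> ('v \<Rightarrow> 'v) \<Rightarrow> ('v \<Rightarrow> 'v) \<Rightarrow> nat \<Rightarrow> (nat \<Rightarrow> 'v set) \<Rightarrow> bool" where
  "standard_ordering scale A B d Vs \<longleftrightarrow>
     inj_on Vs {0..d} \<and> Vs ` {0..d} = eigenspaces scale A \<and>
     (\<forall>i\<le>d. B ` Vs i \<subseteq> module.span scale
        ((if 0 < i then Vs (i - 1) else {}) \<union> Vs i \<union> (if i < d then Vs (i + 1) else {})))"

definition tridiagonal_pair ::
  "('k::field \<Rightarrow> 'v::ab_group_add \<Rightarrow> 'v) \<Rightarrow> ('v \<Rightarrow> 'v) \<Rightarrow> ('v \<Rightarrow> 'v) \<Rightarrow> bool" where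
  "tridiagonal_pair scale A As \<longleftrightarrow>
     diagonalizable scale A \<and> diagonalizable scale As \<and>
     (\<exists>d Vs. standard_ordering scale A As d Vs) \<and>
     (\<exists>\<delta> Vss. standard_ordering scale As A \<delta> Vss) \<and>
     (\<forall>W. module.subspace scale W \<and> A ` W \<subseteq> W \<and> As ` W \<subseteq> W \<longrightarrow> W = {0} \<or> W = UNIV)"

definition is_decomposition ::
  "('k::field \<Rightarrow> 'v::ab_group_add \<Rightarrow> 'v) \<Rightarrow> nat \<Rightarrow> (nat \<Rightarrow> 'v set) \<Rightarrow> bool" where
  "is_decomposition scale d Ws \<longleftrightarrow>
     (\<forall>i\<le>d. Ws i \<noteq> {0}) \<and>
     module.span scale (\<Union>i\<le>d. Ws i) = UNIV \<and>
     (\<forall>vs. (\<forall>i\<le>d. vs i \<in> Ws i) \<and> (\<Sum>i\<le>d. vs i) = 0 \<longrightarrow> (\<forall>i\<le>d. vs i = 0))"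

end

theory Submission
  imports Defs
begin

text \<open>
  Put U i = (V*_0 + ... + V*_i) \<inter> (V_0 + ... + V_(d-i)), on which B acts as b q^(2i-d). For u in
  U i write A u = a q^(d-2i) u + w. Subtracting the eigenvalue of V_(d-i) lowers the V-filtration by
  one step, and A, being tridiagonal on the V*_j, raises the V*-filtration by at most one step; hence
  w \<in> U (i+1), and w = 0 if i = d. So B multiplies w by q^2 times its eigenvalue on u, the w-terms
  of q A B u - q^-1 B A u cancel, and what is left is (q - q^-1) a b u. As the U i span V, this is
  the first identity. The other three are the same identity for the data with A, A* interchanged
  and q replaced by q^-1 (this maps the first decomposition to itself, reindexed by i \<mapsto> d - i),
  and/or with both standard orderings reversed (this maps the second decomposition to the first).
\<close>

context vector_space
begin

lemma linear_image_span_subset: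
  assumes "Vector_Spaces.linear scale scale f" and "f ` S \<subseteq> span T"
  shows "f ` span S \<subseteq> span T"
proof -
  interpret f: Vector_Spaces.linear scale scale f by fact
  show ?thesis
    using assms(2) by (metis f.span_image span_minimal subspace_span)
qed

lemma eigen_diff_in_span_Diff:
  assumes X: "Vector_Spaces.linear scale scale X"
    and eigen: "\<And>j v. j \<in> J \<Longrightarrow> v \<in> V j \<Longrightarrow> X v = scale (t j) v"
    and v: "v \<in> span (\<Union>j\<in>J. V j)"
  shows "X v - scale (t k) v \<in> span (\<Union>j\<in>J - {k}. V j)"
proof -
  interpret pair: vector_space_pair scale scale ..
  let ?f = "\<lambda>v. X v - scale (t k) v"
  have "Vector_Spaces.linear scale scale ?f"
    using X linear_scale_self by (rule pair.linear_compose_sub)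
  moreover have "?f ` V j \<subseteq> span (\<Union>j\<in>J - {k}. V j)" if "j \<in> J" for j
  proof (cases "j = k")
    case True then show ?thesis using eigen that by (auto simp: span_zero)
  next
    case False then show ?thesis using eigen that
      by (force simp: scale_left_diff_distrib[symmetric] intro: span_scale span_base)
  qed
  ultimately have "?f ` span (\<Union>j\<in>J. V j) \<subseteq> span (\<Union>j\<in>J - {k}. V j)"
    by (intro linear_image_span_subset) auto
  with v show ?thesis by blast
qed

lemma q_commutator_eq_scale:
  assumes X: "Vector_Spaces.linear scale scale X" and Y: "Vector_Spaces.linear scale scale Y"
    and spanning: "span (\<Union>i\<in>I. U i) = UNIV"
    and Y_u: "\<And>i u. i \<in> I \<Longrightarrow> u \<in> U i \<Longrightarrow> Y u = scale (\<beta> i) u"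
    and Y_w: "\<And>i u. i \<in> I \<Longrightarrow> u \<in> U i \<Longrightarrow>
                Y (X u - scale (\<alpha> i) u) = scale (\<gamma> i) (X u - scale (\<alpha> i) u)"
    and c: "\<And>i. i \<in> I \<Longrightarrow> \<alpha> i * \<beta> i = c"
    and p: "\<And>i. i \<in> I \<Longrightarrow> p * \<beta> i = p' * \<gamma> i"
  shows "scale p (X (Y v)) - scale p' (Y (X v)) = scale ((p - p') * c) v"
proof -
  interpret pair: vector_space_pair scale scale ..
  interpret X: Vector_Spaces.linear scale scale X by fact
  interpret Y: Vector_Spaces.linear scale scale Y by fact
  have linear: "Vector_Spaces.linear scale scale (\<lambda>v. scale p (X (Y v)) - scale p' (Y (X v)))"
    by (intro pair.linear_compose_sub pair.linear_compose_scale_right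
        Vector_Spaces.linear_compose[OF Y X, unfolded o_def]
        Vector_Spaces.linear_compose[OF X Y, unfolded o_def])
  have on_spanning_set: "scale p (X (Y u)) - scale p' (Y (X u)) = scale ((p - p') * c) u"
    if "u \<in> (\<Union>i\<in>I. U i)" for u
  proof -
    from that obtain i where i: "i \<in> I" and u: "u \<in> U i" by blast
    define w where "w = X u - scale (\<alpha> i) u"
    have Xu: "X u = scale (\<alpha> i) u + w" by (simp add: w_def)
    have "scale p (X (Y u)) = scale (p * (\<beta> i * \<alpha> i)) u + scale (p * \<beta> i) w"
      by (simp only: Y_u[OF i u] X.scale Xu scale_right_distrib scale_scale)
    moreover have "scale p' (Y (X u)) = scale (p' * (\<alpha> i * \<beta> i)) u + scale (p' * \<gamma> i) w"
      using Y_w[OF i u]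
      by (simp add: Xu Y.add Y.scale Y_u[OF i u] w_def[symmetric] scale_right_distrib)
    ultimately have "scale p (X (Y u)) - scale p' (Y (X u))
        = scale ((p - p') * (\<alpha> i * \<beta> i)) u + scale (p * \<beta> i - p' * \<gamma> i) w"
      by (simp only: add_diff_add scale_left_diff_distrib left_diff_distrib mult.commute[of "\<beta> i"])
    then show ?thesis
      by (simp only: c[OF i] p[OF i] diff_self scale_zero_left add_0_right)
  qed
  show ?thesis
    using pair.linear_eq_on_span[OF linear linear_scale_self, of "\<Union>i\<in>I. U i"]
      on_spanning_set spanning
    by blast
qed

end

definition adjacent_spaces :: "nat \<Rightarrow> (nat \<Rightarrow> 'a set) \<Rightarrow> nat \<Rightarrow> 'a set" where
  "adjacent_spaces d W i =
     (if 0 < i then W (i - 1) else {}) \<union> W i \<union> (if i < d then W (i + 1) else {})"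

lemma adjacent_spaces_reverse:
  "i \<le> d \<Longrightarrow> adjacent_spaces d (\<lambda>j. W (d - j)) i = adjacent_spaces d W (d - i)"
  by (auto simp: adjacent_spaces_def Suc_diff_le)

lemma adjacent_spaces_subset: "adjacent_spaces d W j \<subseteq> W (j - 1) \<union> W j \<union> W (j + 1)"
  by (auto simp: adjacent_spaces_def)

lemma UN_atMost_reverse:
  fixes d k :: nat
  shows "(\<Union>j\<le>k. W (d - j)) = (\<Union>j\<in>{d - k..d}. W j)"
proof -
  have "(\<lambda>j. d - j) ` {..k} = {d - k..d}"
  proof
    show "{d - k..d} \<subseteq> (\<lambda>j. d - j) ` {..k}"
    proof
      fix x assume "x \<in> {d - k..d}"
      then have "d - x \<in> {..k}" and "x = d - (d - x)" by auto
      then show "x \<in> (\<lambda>j. d - j) ` {..k}" by (rule rev_image_eqI)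
    qed
  qed (auto simp: diff_le_mono2)
  then show ?thesis by (metis image_image)
qed

lemma standard_ordering_adjacent_spaces:
  "standard_ordering scale A B d Vs \<Longrightarrow> i \<le> d \<Longrightarrow>
     B ` Vs i \<subseteq> module.span scale (adjacent_spaces d Vs i)"
  by (simp add: standard_ordering_def adjacent_spaces_def)

locale q_tridiagonal_system = vector_space scale
  for scale :: "'k::field \<Rightarrow> 'v::ab_group_add \<Rightarrow> 'v" +
  fixes A As :: "'v \<Rightarrow> 'v" and d :: nat and Vs Vss :: "nat \<Rightarrow> 'v set" and q a as :: 'k
  assumes linear_A: "Vector_Spaces.linear scale scale A"
    and linear_As: "Vector_Spaces.linear scale scale As"
    and A_tridiagonal: "\<And>i. i \<le> d \<Longrightarrow> A ` Vss i \<subseteq> span (adjacent_spaces d Vss i)"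
    and As_tridiagonal: "\<And>i. i \<le> d \<Longrightarrow> As ` Vs i \<subseteq> span (adjacent_spaces d Vs i)"
    and eigen_A: "\<And>i v. i \<le> d \<Longrightarrow> v \<in> Vs i \<Longrightarrow> A v = scale (a * q powi (2 * int i - int d)) v"
    and eigen_As: "\<And>i v. i \<le> d \<Longrightarrow> v \<in> Vss i \<Longrightarrow> As v = scale (as * q powi (int d - 2 * int i)) v"
    and q_nonzero: "q \<noteq> 0"
begin

definition lower_split :: "nat \<Rightarrow> 'v set" where
  "lower_split i = span (\<Union>j\<le>i. Vss j) \<inter> span (\<Union>j\<le>d - i. Vs j)"

definition upper_split :: "nat \<Rightarrow> 'v set" where
  "upper_split i = span (\<Union>j\<in>{d - i..d}. Vss j) \<inter> span (\<Union>j\<in>{i..d}. Vs j)"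

lemma A_lower_split:
  assumes i: "i \<le> d" and u: "u \<in> lower_split i"
  shows "A u - scale (a * q powi (int d - 2 * int i)) u
           \<in> span (\<Union>j\<le>Suc i. Vss j) \<inter> span (\<Union>j<d - i. Vs j)"
proof
  have "A u - scale (a * q powi (2 * int (d - i) - int d)) u
          \<in> span (\<Union>j\<in>{..d - i} - {d - i}. Vs j)"
    using u eigen_A i
    by (intro eigen_diff_in_span_Diff[OF linear_A]) (auto simp: lower_split_def)
  moreover have "2 * int (d - i) - int d = int d - 2 * int i"
    using i by (simp add: of_nat_diff)
  moreover have "{..d - i} - {d - i} = {..<d - i}" by auto
  ultimately show "A u - scale (a * q powi (int d - 2 * int i)) u \<in> span (\<Union>j<d - i. Vs j)"
    by simp
  have "adjacent_spaces d Vss j \<subseteq> (\<Union>k\<le>Suc i. Vss k)" if "j \<le> i" for j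
  proof -
    have "{j - 1, j, j + 1} \<subseteq> {..Suc i}" using that by auto
    then show ?thesis using adjacent_spaces_subset[of d Vss j] by blast
  qed
  then have "A ` Vss j \<subseteq> span (\<Union>k\<le>Suc i. Vss k)" if "j \<le> i" for j
    using A_tridiagonal[of j] span_mono that i by (meson order_trans)
  then have "A ` (\<Union>j\<le>i. Vss j) \<subseteq> span (\<Union>j\<le>Suc i. Vss j)"
    unfolding image_UN by (rule UN_least) simp
  then have "A ` span (\<Union>j\<le>i. Vss j) \<subseteq> span (\<Union>j\<le>Suc i. Vss j)"
    by (rule linear_image_span_subset[OF linear_A])
  then have "A u \<in> span (\<Union>j\<le>Suc i. Vss j)"
    using u by (auto simp: lower_split_def)
  moreover have "u \<in> span (\<Union>j\<le>Suc i. Vss j)"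
    using u span_mono[OF SUP_subset_mono[of "{..i}" "{..Suc i}" Vss Vss]]
    by (auto simp: lower_split_def)
  ultimately show "A u - scale (a * q powi (int d - 2 * int i)) u \<in> span (\<Union>j\<le>Suc i. Vss j)"
    by (intro span_diff span_scale)
qed

lemma q_commutator_lower_A:
  assumes linear_B: "Vector_Spaces.linear scale scale B"
    and spanning: "span (\<Union>i\<le>d. lower_split i) = UNIV"
    and B_eigen: "\<And>i v. i \<le> d \<Longrightarrow> v \<in> lower_split i \<Longrightarrow> B v = scale (b * q powi (2 * int i - int d)) v"
  shows "scale q (A (B v)) - scale (inverse q) (B (A v)) = scale ((q - inverse q) * (a * b)) v"
proof (rule q_commutator_eq_scale[OF linear_A linear_B spanning,
      where \<alpha> = "\<lambda>i. a * q powi (int d - 2 * int i)" and \<beta> = "\<lambda>i. b * q powi (2 * int i - int d)"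
        and \<gamma> = "\<lambda>i. b * q powi (2 * int (Suc i) - int d)"])
  fix i u assume i: "i \<in> {..d}" and u: "u \<in> lower_split i"
  then show "B u = scale (b * q powi (2 * int i - int d)) u" by (simp add: B_eigen)
  let ?w = "A u - scale (a * q powi (int d - 2 * int i)) u"
  have w: "?w \<in> span (\<Union>j\<le>Suc i. Vss j) \<inter> span (\<Union>j<d - i. Vs j)"
    using A_lower_split i u by simp
  show "B ?w = scale (b * q powi (2 * int (Suc i) - int d)) ?w"
  proof (cases "i < d")
    case True
    then have "{..<d - i} = {..d - Suc i}" by auto
    then have "?w \<in> lower_split (Suc i)" using w by (simp add: lower_split_def)
    with True show ?thesis by (intro B_eigen) simp_all
  next
    case False
    then have "?w = 0" using w i by simp
    interpret B: Vector_Spaces.linear scale scale B by (fact linear_B)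
    show ?thesis by (simp add: \<open>?w = 0\<close> B.zero)
  qed
next
  fix i
  show "a * q powi (int d - 2 * int i) * (b * q powi (2 * int i - int d)) = a * b"
    using q_nonzero by (simp add: power_int_add[symmetric] mult_ac)
  show "q * (b * q powi (2 * int i - int d)) = inverse q * (b * q powi (2 * int (Suc i) - int d))"
  proof -
    have "q powi (2 * int (Suc i) - int d) = q powi (2 + (2 * int i - int d))"
      by (rule arg_cong[where f = "power_int q"]) simp
    also have "\<dots> = q powi 2 * q powi (2 * int i - int d)"
      by (rule power_int_add) (simp add: q_nonzero)
    finally show ?thesis using q_nonzero by (simp add: field_simps power2_eq_square)
  qed
qed

lemma inverse_powi: "inverse q powi n = q powi (- n)"
  by (simp add: power_int_inverse power_int_minus)

lemma swapped_system: "q_tridiagonal_system scale As A d Vss Vs (inverse q) as a"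
  by (intro q_tridiagonal_system.intro q_tridiagonal_system_axioms.intro vector_space_axioms)
    (simp_all add: linear_A linear_As A_tridiagonal As_tridiagonal eigen_A eigen_As q_nonzero inverse_powi)

lemma reversed_system:
  "q_tridiagonal_system scale As A d (\<lambda>j. Vss (d - j)) (\<lambda>j. Vs (d - j)) q as a"
proof (intro q_tridiagonal_system.intro q_tridiagonal_system_axioms.intro vector_space_axioms)
  fix i v assume i: "i \<le> d"
  show "As ` Vs (d - i) \<subseteq> span (adjacent_spaces d (\<lambda>j. Vs (d - j)) i)"
    using As_tridiagonal[of "d - i"] adjacent_spaces_reverse[OF i, of Vs] by simp
  show "A ` Vss (d - i) \<subseteq> span (adjacent_spaces d (\<lambda>j. Vss (d - j)) i)"
    using A_tridiagonal[of "d - i"] adjacent_spaces_reverse[OF i, of Vss] by simp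
  have "int d - 2 * int (d - i) = 2 * int i - int d" and "2 * int (d - i) - int d = int d - 2 * int i"
    using i by (simp_all add: of_nat_diff)
  then show "v \<in> Vss (d - i) \<Longrightarrow> As v = scale (as * q powi (2 * int i - int d)) v"
    and "v \<in> Vs (d - i) \<Longrightarrow> A v = scale (a * q powi (int d - 2 * int i)) v"
    using eigen_As[of "d - i" v] eigen_A[of "d - i" v] by simp_all
qed (simp_all add: linear_A linear_As q_nonzero)

lemma q_commutator_lower:
  assumes linear_B: "Vector_Spaces.linear scale scale B"
    and spanning: "span (\<Union>i\<le>d. lower_split i) = UNIV"
    and B_eigen: "\<And>i v. i \<le> d \<Longrightarrow> v \<in> lower_split i \<Longrightarrow> B v = scale (b * q powi (2 * int i - int d)) v"
  shows "scale q (A (B v)) - scale (inverse q) (B (A v)) = scale ((q - inverse q) * (a * b)) v"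
    and "scale q (B (As v)) - scale (inverse q) (As (B v)) = scale ((q - inverse q) * (as * b)) v"
proof -
  show "scale q (A (B v)) - scale (inverse q) (B (A v)) = scale ((q - inverse q) * (a * b)) v"
    using linear_B spanning B_eigen by (rule q_commutator_lower_A)
  interpret swapped: q_tridiagonal_system scale As A d Vss Vs "inverse q" as a
    by (rule swapped_system)
  have split: "swapped.lower_split i = lower_split (d - i)" if "i \<le> d" for i
    using that by (auto simp: swapped.lower_split_def lower_split_def)
  have "scale (inverse q) (As (B v)) - scale (inverse (inverse q)) (B (As v))
      = scale ((inverse q - inverse (inverse q)) * (as * b)) v"
  proof (rule swapped.q_commutator_lower_A[OF linear_B])
    have "(\<Union>i\<le>d. swapped.lower_split i) = (\<Union>i\<le>d. lower_split i)"
      using UN_atMost_reverse[of lower_split d d] by (simp add: split atLeast0AtMost)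
    with spanning show "span (\<Union>i\<le>d. swapped.lower_split i) = UNIV" by simp
  next
    fix i w assume "i \<le> d" and "w \<in> swapped.lower_split i"
    then show "B w = scale (b * inverse q powi (2 * int i - int d)) w"
      using B_eigen[of "d - i" w] by (simp add: split of_nat_diff inverse_powi algebra_simps)
  qed
  then show "scale q (B (As v)) - scale (inverse q) (As (B v)) = scale ((q - inverse q) * (as * b)) v"
    by (metis inverse_inverse_eq minus_diff_eq scale_minus_left mult_minus_left)
qed

lemma q_commutator_upper:
  assumes linear_B: "Vector_Spaces.linear scale scale B"
    and spanning: "span (\<Union>i\<le>d. upper_split i) = UNIV"
    and B_eigen: "\<And>i v. i \<le> d \<Longrightarrow> v \<in> upper_split i \<Longrightarrow> B v = scale (b * q powi (int d - 2 * int i)) v"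
  shows "scale q (As (B v)) - scale (inverse q) (B (As v)) = scale ((q - inverse q) * (as * b)) v"
    and "scale q (B (A v)) - scale (inverse q) (A (B v)) = scale ((q - inverse q) * (a * b)) v"
proof -
  interpret reversed: q_tridiagonal_system scale As A d "\<lambda>j. Vss (d - j)" "\<lambda>j. Vs (d - j)" q as a
    by (rule reversed_system)
  have split: "reversed.lower_split i = upper_split (d - i)" if "i \<le> d" for i
    using that UN_atMost_reverse[of Vs d i] UN_atMost_reverse[of Vss d "d - i"]
    by (simp add: reversed.lower_split_def upper_split_def Int_commute)
  have "(\<Union>i\<le>d. reversed.lower_split i) = (\<Union>i\<le>d. upper_split i)"
    using UN_atMost_reverse[of upper_split d d] by (simp add: split atLeast0AtMost)
  with spanning have "span (\<Union>i\<le>d. reversed.lower_split i) = UNIV" by simp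
  moreover have "B w = scale (b * q powi (2 * int i - int d)) w"
    if "i \<le> d" and "w \<in> reversed.lower_split i" for i w
    using that B_eigen[of "d - i" w] by (simp add: split of_nat_diff algebra_simps)
  ultimately show "scale q (As (B v)) - scale (inverse q) (B (As v)) = scale ((q - inverse q) * (as * b)) v"
    and "scale q (B (A v)) - scale (inverse q) (A (B v)) = scale ((q - inverse q) * (a * b)) v"
    using linear_B by (blast intro: reversed.q_commutator_lower)+
qed

end

lemma q_tridiagonal_systemI:
  assumes "vector_space scale" and "tridiagonal_pair scale A As"
    and "standard_ordering scale A As d Vs" and "standard_ordering scale As A d Vss"
    and "\<forall>i\<le>d. Vs i = eigenspace scale A (a * q powi (2 * int i - int d))"
    and "\<forall>i\<le>d. Vss i = eigenspace scale As (as * q powi (int d - 2 * int i))"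
    and "q \<noteq> 0"
  shows "q_tridiagonal_system scale A As d Vs Vss q a as"
proof (intro q_tridiagonal_system.intro q_tridiagonal_system_axioms.intro assms(1))
  show "Vector_Spaces.linear scale scale A" and "Vector_Spaces.linear scale scale As"
    using assms(2) by (simp_all add: tridiagonal_pair_def diagonalizable_def)
  fix i v assume "i \<le> d"
  then show "A ` Vss i \<subseteq> module.span scale (adjacent_spaces d Vss i)"
    and "As ` Vs i \<subseteq> module.span scale (adjacent_spaces d Vs i)"
    using assms(3,4) by (simp_all add: standard_ordering_adjacent_spaces)
  show "v \<in> Vs i \<Longrightarrow> A v = scale (a * q powi (2 * int i - int d)) v"
    and "v \<in> Vss i \<Longrightarrow> As v = scale (as * q powi (int d - 2 * int i)) v"
    using \<open>i \<le> d\<close> assms(5,6) by (simp_all add: eigenspace_def)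
qed (fact assms(7))

theorem theorem7p1:
  fixes scale :: "'k::field \<Rightarrow> 'v::ab_group_add \<Rightarrow> 'v"
    and A As B Bs :: "'v \<Rightarrow> 'v"
    and q a as b bs :: 'k
    and d :: nat
    and Vs Vss :: "nat \<Rightarrow> 'v set"
  assumes "alg_closed_field TYPE('k)"
    and "vector_space scale"
    and "\<exists>S. finite S \<and> module.span scale S = UNIV"
    and "(UNIV :: 'v set) \<noteq> {0}"
    and "q \<noteq> 0" and "\<forall>n::nat. n > 0 \<longrightarrow> q ^ n \<noteq> 1"
    and "tridiagonal_pair scale A As"
    and "standard_ordering scale A As d Vs"
    and "standard_ordering scale As A d Vss"
    and "a \<noteq> 0" and "as \<noteq> 0"
    and "\<forall>i\<le>d. Vs i = eigenspace scale A (a * q powi (2 * int i - int d))"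
    and "\<forall>i\<le>d. Vss i = eigenspace scale As (as * q powi (int d - 2 * int i))"
    and "b \<noteq> 0" and "bs \<noteq> 0"
    and "is_decomposition scale d
           (\<lambda>i. module.span scale (\<Union>j\<le>i. Vss j) \<inter> module.span scale (\<Union>j\<le>d - i. Vs j))"
    and "is_decomposition scale d
           (\<lambda>i. module.span scale (\<Union>j\<in>{d - i..d}. Vss j) \<inter> module.span scale (\<Union>j\<in>{i..d}. Vs j))"
    and "Vector_Spaces.linear scale scale B"
    and "\<forall>i\<le>d. \<forall>v \<in> module.span scale (\<Union>j\<le>i. Vss j) \<inter> module.span scale (\<Union>j\<le>d - i. Vs j).
           B v = scale (b * q powi (2 * int i - int d)) v"
    and "Vector_Spaces.linear scale scale Bs"
    and "\<forall>i\<le>d. \<forall>v \<in> module.span scale (\<Union>j\<in>{d - i..d}. Vss j) \<inter> module.span scale (\<Union>j\<in>{i..d}. Vs j).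
           Bs v = scale (bs * q powi (int d - 2 * int i)) v"
  shows "(\<forall>v. scale (inverse (q - inverse q)) (scale q (A (B v)) - scale (inverse q) (B (A v)))
                = scale (a * b) v)
       \<and> (\<forall>v. scale (inverse (q - inverse q)) (scale q (B (As v)) - scale (inverse q) (As (B v)))
                = scale (as * b) v)
       \<and> (\<forall>v. scale (inverse (q - inverse q)) (scale q (As (Bs v)) - scale (inverse q) (Bs (As v)))
                = scale (as * bs) v)
       \<and> (\<forall>v. scale (inverse (q - inverse q)) (scale q (Bs (A v)) - scale (inverse q) (A (Bs v)))
                = scale (a * bs) v)"
proof -
  interpret vector_space scale by fact
  interpret T: q_tridiagonal_system scale A As d Vs Vss q a as
    using assms(2,7,8,9,12,13,5) by (rule q_tridiagonal_systemI)
  have lower_spanning: "span (\<Union>i\<le>d. T.lower_split i) = UNIV"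
    and upper_spanning: "span (\<Union>i\<le>d. T.upper_split i) = UNIV"
    using assms(16,17) by (simp_all add: is_decomposition_def T.lower_split_def T.upper_split_def)
  have B_eigen: "\<And>i v. i \<le> d \<Longrightarrow> v \<in> T.lower_split i \<Longrightarrow> B v = scale (b * q powi (2 * int i - int d)) v"
    and Bs_eigen: "\<And>i v. i \<le> d \<Longrightarrow> v \<in> T.upper_split i \<Longrightarrow> Bs v = scale (bs * q powi (int d - 2 * int i)) v"
    using assms(19,21) by (simp_all add: T.lower_split_def T.upper_split_def)
  note commutators = T.q_commutator_lower[OF assms(18) lower_spanning B_eigen]
    T.q_commutator_upper[OF assms(20) upper_spanning Bs_eigen]
  have "q - inverse q \<noteq> 0"
  proof
    assume "q - inverse q = 0"
    then have "q ^ 2 = 1" using assms(5) by (simp add: power2_eq_square field_simps)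
    with assms(6) show False by auto
  qed
  then have "scale (inverse (q - inverse q)) (scale q x - scale (inverse q) y) = scale c v"
    if "scale q x - scale (inverse q) y = scale ((q - inverse q) * c) v" for x y c v
    by (simp add: that)
  then show ?thesis using commutators by blast
qed

end
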